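(* Let $\mathbb{T}=\mathbb{R}/\mathbb{Z}$ with Haar probability measure $\mu$, outer measure $\mu^*$ and inner measure $\mu_*$. There exist subsets $A,B\subset\mathbb{T}$ and a real number $\alpha>0$ such that $A+B$ is Haar measurable and satisfies $0<\mu(A+B)\leq\alpha\,\mu^*(A)$, and yet for all positive integers $m,n$ the set $mB-nB$ is Haar measurable and satisfies $\mu(mB-nB)>\alpha^{m+n}\mu_*(A)$.
   Context: $\mu^*(S)=\inf\{\mu(U):U\supset S\text{ measurable}\}$, $\mu_*(S)=\sup\{\mu(K):K\subset S,\ K\text{ compact}\}$. $mB-nB=\{b_1+\dots+b_m-b_1'-\dots-b_n':b_i,b_j'\in B\}$. *)

theory Defs
  imports "HOL-Analysis.Analysis"
begin

text \<open>The circle group T = R/Z is represented by the fundamental domain [0,1),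
  with group operation addition modulo 1 (via frac). The quotient map R -> T is frac.\<close>

definition torus :: "real set" where
  "torus = {0..<1}"

definition tsum :: "real set \<Rightarrow> real set \<Rightarrow> real set" where
  "tsum A B = {frac (a + b) | a b. a \<in> A \<and> b \<in> B}"

definition tdiffset :: "nat \<Rightarrow> nat \<Rightarrow> real set \<Rightarrow> real set" where
  "tdiffset m n B = {frac ((\<Sum>i<m. b i) - (\<Sum>j<n. c j)) | b c.
       (\<forall>i<m. b i \<in> B) \<and> (\<forall>j<n. c j \<in> B)}"

text \<open>Haar measurable subsets of T: Lebesgue measurable subsets of [0,1)
  (Haar probability measure on T = Lebesgue measure on [0,1)).\<close>
definition haar_measurable :: "real set \<Rightarrow> bool" where
  "haar_measurable S \<longleftrightarrow> S \<subseteq> torus \<and> S \<in> sets lebesgue"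

definition haar :: "real set \<Rightarrow> real" where
  "haar S = measure lebesgue S"

definition torus_compact :: "real set \<Rightarrow> bool" where
  "torus_compact K \<longleftrightarrow> (\<exists>C. compact C \<and> K = frac ` C)"

definition outer_haar :: "real set \<Rightarrow> real" where
  "outer_haar S = Inf {haar U | U. haar_measurable U \<and> S \<subseteq> U}"

definition inner_haar :: "real set \<Rightarrow> real" where
  "inner_haar S = Sup {haar K | K. K \<subseteq> S \<and> torus_compact K}"

end

theory Submission
  imports Defs
begin

text \<open>Take \<open>B = \<bbbT>\<close>, so that \<open>A + B = mB - nB = \<bbbT>\<close> have measure 1 for every nonempty \<open>A\<close>,
  and let \<open>A\<close> be a Vitali set, i.e. one representative in \<open>[0,1)\<close> of every coset of \<open>\<rat>\<close>.
  Its countably many rational translates cover \<open>[0,1)\<close>, so \<open>A\<close> is not null and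
  \<open>\<mu>\<^sup>*(A) > 0\<close>; with \<open>\<alpha> = 1 / \<mu>\<^sup>*(A)\<close> the first inequality is an equality.
  A measurable subset \<open>K \<subseteq> A\<close> has pairwise disjoint translates \<open>K + 1/(i+1)\<close> inside
  \<open>[0,2]\<close>, so \<open>K\<close> is null and \<open>\<mu>\<^sub>*(A) = 0\<close>.\<close>

lemma rat_diff_trans_iff:
  fixes x y z :: real
  assumes "x - y \<in> \<rat>"
  shows "x - z \<in> \<rat> \<longleftrightarrow> y - z \<in> \<rat>"
proof
  assume "x - z \<in> \<rat>"
  then have "(x - z) - (x - y) \<in> \<rat>" using assms by (rule Rats_diff)
  then show "y - z \<in> \<rat>" by simp
next
  assume "y - z \<in> \<rat>"
  with assms have "(x - y) + (y - z) \<in> \<rat>" by (rule Rats_add)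
  then show "x - z \<in> \<rat>" by simp
qed

definition vitali_rep :: "real \<Rightarrow> real" where
  "vitali_rep x = (SOME y. y \<in> {0..<1} \<and> x - y \<in> \<rat>)"

definition vitali_set :: "real set" where
  "vitali_set = range vitali_rep"

lemma vitali_rep: "vitali_rep x \<in> {0..<1} \<and> x - vitali_rep x \<in> \<rat>"
proof -
  have "frac x \<in> {0..<1} \<and> x - frac x \<in> \<rat>"
    by (simp add: frac_lt_1) (simp add: frac_def)
  then show ?thesis unfolding vitali_rep_def by (rule someI)
qed

lemma vitali_rep_cong:
  assumes "x - y \<in> \<rat>"
  shows "vitali_rep x = vitali_rep y"
  unfolding vitali_rep_def using rat_diff_trans_iff[OF assms] by simp

lemma vitali_set_subset: "vitali_set \<subseteq> torus"
  using vitali_rep unfolding vitali_set_def torus_def by auto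

lemma vitali_set_rat_diff_imp_eq:
  assumes "u \<in> vitali_set" "v \<in> vitali_set" "u - v \<in> \<rat>"
  shows "u = v"
proof -
  obtain x y where u: "u = vitali_rep x" and v: "v = vitali_rep y"
    using assms(1,2) unfolding vitali_set_def by auto
  have "x - u \<in> \<rat>" "y - v \<in> \<rat>"
    using vitali_rep u v by auto
  then have "(x - u) + (u - v) - (y - v) \<in> \<rat>"
    using assms(3) by (metis Rats_add Rats_diff)
  then have "x - y \<in> \<rat>" by simp
  then show ?thesis unfolding u v by (rule vitali_rep_cong)
qed

lemma rat_translates_vitali_set_cover: "{0..<1} \<subseteq> (\<Union>q\<in>\<rat>. (+) q ` vitali_set)"
proof
  fix x :: real
  have "x = (x - vitali_rep x) + vitali_rep x" by simp
  then show "x \<in> (\<Union>q\<in>\<rat>. (+) q ` vitali_set)"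
    using vitali_rep[of x] unfolding vitali_set_def by blast
qed

lemma lmeasurable_if_subset_torus:
  assumes "S \<subseteq> torus" "S \<in> sets lebesgue"
  shows "S \<in> lmeasurable"
proof -
  have "S \<subseteq> {0..1}"
    using assms(1) unfolding torus_def by auto
  then have "bounded S"
    by (rule bounded_subset[OF bounded_closed_interval])
  then show ?thesis
    using assms(2) by (rule bounded_set_imp_lmeasurable)
qed

lemma disjoint_family_rat_translates:
  fixes K :: "real set"
  assumes separated: "\<And>u v. u \<in> K \<Longrightarrow> v \<in> K \<Longrightarrow> u - v \<in> \<rat> \<Longrightarrow> u = v"
  shows "disjoint_family (\<lambda>i. (+) (1 / real (Suc i)) ` K)"
  unfolding disjoint_family_on_def
proof (intro ballI impI)
  fix i j :: nat assume "i \<noteq> j"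
  show "(+) (1 / real (Suc i)) ` K \<inter> (+) (1 / real (Suc j)) ` K = {}"
  proof (rule ccontr)
    assume "(+) (1 / real (Suc i)) ` K \<inter> (+) (1 / real (Suc j)) ` K \<noteq> {}"
    then obtain a b where ab: "a \<in> K" "b \<in> K" "1 / real (Suc i) + a = 1 / real (Suc j) + b"
      by auto
    then have "a - b = 1 / real (Suc j) - 1 / real (Suc i)"
      by linarith
    then have "a - b \<in> \<rat>"
      by simp
    then have "a = b"
      using ab(1,2) separated by blast
    with ab(3) have "1 / real (Suc i) = 1 / real (Suc j)"
      by simp
    with \<open>i \<noteq> j\<close> show False by simp
  qed
qed

lemma measure_rat_separated_eq_0:
  fixes K :: "real set"
  assumes K_sub: "K \<subseteq> torus" and K_meas: "K \<in> sets lebesgue"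
    and separated: "\<And>u v. u \<in> K \<Longrightarrow> v \<in> K \<Longrightarrow> u - v \<in> \<rat> \<Longrightarrow> u = v"
  shows "measure lebesgue K = 0"
proof -
  define T where "T i = (+) (1 / real (Suc i)) ` K" for i
  have T_lmeas: "T i \<in> lmeasurable" for i
    unfolding T_def using lmeasurable_if_subset_torus[OF K_sub K_meas]
    by (rule measurable_translation)
  have N_bound: "real N * measure lebesgue K \<le> 2" for N
  proof -
    have "1 / real (Suc i) + a \<in> {0..2}" if "a \<in> K" for i a
    proof -
      have "0 \<le> 1 / real (Suc i)" "1 / real (Suc i) \<le> 1"
        by (simp_all add: field_simps)
      moreover have "0 \<le> a" "a < 1"
        using that K_sub unfolding torus_def by auto
      ultimately show ?thesis
        unfolding atLeastAtMost_iff by linarith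
    qed
    then have "(\<Union>i<N. T i) \<subseteq> {0..2}"
      unfolding T_def by blast
    then have "measure lebesgue (\<Union>i<N. T i) \<le> measure lebesgue {0..2::real}"
      by (intro measure_mono_fmeasurable) (use T_lmeas in auto)
    moreover have "measure lebesgue (\<Union>i<N. T i) = (\<Sum>i<N. measure lebesgue (T i))"
    proof (rule measure_finite_Union)
      show "T ` {..<N} \<subseteq> sets lebesgue"
        using T_lmeas by (auto intro: fmeasurableD)
      show "disjoint_family_on T {..<N}"
        using disjoint_family_rat_translates[OF separated]
        unfolding T_def by (auto simp: disjoint_family_on_def)
      show "emeasure lebesgue (T i) \<noteq> \<infinity>" for i
        using fmeasurableD2[OF T_lmeas] by simp
    qed simp
    moreover have "measure lebesgue (T i) = measure lebesgue K" for i
      unfolding T_def by (rule measure_translation)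
    ultimately show ?thesis by simp
  qed
  show ?thesis
  proof (rule ccontr)
    assume "measure lebesgue K \<noteq> 0"
    then have "measure lebesgue K > 0"
      using measure_nonneg[of lebesgue K] by linarith
    then obtain N where "2 < real N * measure lebesgue K"
      using ex_less_of_nat_mult by blast
    with N_bound show False by (simp add: not_le[symmetric])
  qed
qed

lemma not_negligible_if_rat_translates_cover:
  fixes S :: "real set"
  assumes "{0..<1} \<subseteq> (\<Union>q\<in>\<rat>. (+) q ` S)"
  shows "\<not> negligible S"
proof
  assume "negligible S"
  then have "negligible (\<Union>q\<in>\<rat>. (+) q ` S)"
    by (intro negligible_countable_Union) (auto simp: countable_rat negligible_translation)
  then have "negligible {0..<1::real}"
    using assms by (rule negligible_subset)
  then show False by (simp add: negligible_iff_measure)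
qed

lemma outer_haar_pos_if_not_negligible:
  assumes "S \<subseteq> torus" "\<not> negligible S"
  shows "outer_haar S > 0"
proof (rule ccontr)
  define \<U> where "\<U> = {haar U | U. haar_measurable U \<and> S \<subseteq> U}"
  assume "\<not> outer_haar S > 0"
  then have Inf_le: "Inf \<U> \<le> 0"
    unfolding outer_haar_def \<U>_def by simp
  have "haar torus \<in> \<U>"
    using assms(1) unfolding \<U>_def haar_measurable_def torus_def by auto
  then have "\<U> \<noteq> {}" by blast
  have "\<exists>U. S \<subseteq> U \<and> U \<in> lmeasurable \<and> measure lebesgue U < e" if "e > 0" for e
  proof -
    obtain U where U: "haar_measurable U" "S \<subseteq> U" "haar U < e"
      using cInf_lessD[OF \<open>\<U> \<noteq> {}\<close>, of e] Inf_le \<open>e > 0\<close> unfolding \<U>_def by force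
    have "U \<in> lmeasurable"
      using U(1) unfolding haar_measurable_def by (auto intro: lmeasurable_if_subset_torus)
    with U show ?thesis unfolding haar_def by blast
  qed
  then have "negligible S" by (simp add: negligible_outer)
  with assms(2) show False ..
qed

lemma inner_haar_eq_0:
  assumes "\<And>K. K \<subseteq> S \<Longrightarrow> K \<in> sets lebesgue \<Longrightarrow> measure lebesgue K = 0"
  shows "inner_haar S = 0"
proof -
  have "haar K = 0" if "K \<subseteq> S" for K
    using assms[OF that] by (cases "K \<in> sets lebesgue") (auto simp: haar_def measure_notin_sets)
  moreover have "torus_compact {}"
    unfolding torus_compact_def by (intro exI[of _ "{}"]) auto
  ultimately have "{haar K | K. K \<subseteq> S \<and> torus_compact K} = {0}"
    by (auto simp: haar_def) (metis empty_subsetI measure_empty)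
  then show ?thesis unfolding inner_haar_def by simp
qed

lemma tsum_torus:
  assumes "A \<noteq> {}"
  shows "tsum A torus = torus"
proof
  show "tsum A torus \<subseteq> torus"
    unfolding tsum_def torus_def by (auto simp: frac_lt_1)
  show "torus \<subseteq> tsum A torus"
  proof
    fix x assume x: "x \<in> torus"
    obtain a where "a \<in> A" using assms by auto
    have "frac (a + frac (x - a)) = frac x"
      by (metis add.commute diff_add_cancel frac_add_of_int_right frac_def
          diff_eq_eq add_diff_eq)
    with x have "x = frac (a + frac (x - a))"
      unfolding torus_def by simp
    moreover have "frac (x - a) \<in> torus"
      unfolding torus_def by (auto simp: frac_lt_1)
    ultimately show "x \<in> tsum A torus"
      unfolding tsum_def using \<open>a \<in> A\<close> by blast
  qed
qed

lemma tdiffset_torus: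
  assumes "m > 0"
  shows "tdiffset m n torus = torus"
proof
  show "tdiffset m n torus \<subseteq> torus"
    unfolding tdiffset_def torus_def by (auto simp: frac_lt_1)
  show "torus \<subseteq> tdiffset m n torus"
  proof
    fix x assume x: "x \<in> torus"
    define b where "b i = (if i = 0 then x else 0)" for i :: nat
    have "(\<Sum>i<m. b i) = x"
      unfolding b_def using assms by (simp add: sum.delta)
    with x have "x = frac ((\<Sum>i<m. b i) - (\<Sum>j<n. (\<lambda>_. 0::real) j))"
      unfolding torus_def by simp
    moreover have "\<forall>i<m. b i \<in> torus" "\<forall>j<n. (\<lambda>_. 0::real) j \<in> torus"
      using x unfolding b_def torus_def by auto
    ultimately show "x \<in> tdiffset m n torus"
      unfolding tdiffset_def by blast
  qed
qed

lemma haar_torus: "haar_measurable torus" "haar torus = 1"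
  unfolding haar_measurable_def haar_def torus_def by auto

theorem proposition5p5:
  shows "\<exists>A B (\<alpha>::real). A \<subseteq> torus \<and> B \<subseteq> torus \<and> \<alpha> > 0 \<and>
     haar_measurable (tsum A B) \<and> 0 < haar (tsum A B) \<and>
     haar (tsum A B) \<le> \<alpha> * outer_haar A \<and>
     (\<forall>m n::nat. m > 0 \<longrightarrow> n > 0 \<longrightarrow>
        haar_measurable (tdiffset m n B) \<and>
        haar (tdiffset m n B) > \<alpha> ^ (m + n) * inner_haar A)"
proof -
  have outer_pos: "outer_haar vitali_set > 0"
    using vitali_set_subset rat_translates_vitali_set_cover
    by (intro outer_haar_pos_if_not_negligible not_negligible_if_rat_translates_cover)
  have inner_0: "inner_haar vitali_set = 0"
    using vitali_set_subset vitali_set_rat_diff_imp_eq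
    by (intro inner_haar_eq_0 measure_rat_separated_eq_0) blast+
  have A_sum: "tsum vitali_set torus = torus"
    by (rule tsum_torus) (simp add: vitali_set_def)
  show ?thesis
    using vitali_set_subset outer_pos inner_0 A_sum tdiffset_torus haar_torus
    by (intro exI[of _ vitali_set] exI[of _ torus] exI[of _ "1 / outer_haar vitali_set"]) auto
qed

end
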